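(* Let $(q_k,p_{k1},p_{k2})_{k\ge2}$ be real numbers with $q_k>0$, $p_{k1}\ge0$, $p_{k2}>0$ and $q_k+p_{k1}+p_{k2}=1$ for all $k\ge2$. Suppose that $a_k\to a>0$ and $b_k\to b>0$ as $k\to\infty$ and that $\varrho_k$ is monotone in $k\ge N_0$ for some $N_0$. Then both $D_X(n)$ and $D_Y(n)$ are monotone in $n>N_0$, and there exist constants $0<c_7<c_8<\infty$ such that for all $n>m\ge1$, $$c_7D_X(m)\le F_X(m)\le c_8D_X(m),\quad c_7D_Y(m)\le F_Y(m)\le c_8D_Y(m),\quad c_7D_Y(m,n)\le F_Y(m,n)\le c_8D_Y(m,n).$$
   Context: For $k\ge2$, $a_k=(p_{k1}+p_{k2})/q_k$, $b_k=p_{k2}/q_k$, $A_k=\begin{pmatrix}a_k&b_k\\1&0\end{pmatrix}$, $\varrho_k=\frac{a_k+\sqrt{a_k^2+4b_k}}{2}$; $\mathbf e_1=(1,0)$, $^t$ is transpose, empty products are the identity. $D_X(n)=1+\sum_{j=n+1}^\infty\prod_{i=n+1}^j\varrho_i$, $D_Y(n)=1+\sum_{j=n+1}^\infty\prod_{i=n+1}^j\varrho_i^{-1}$, and for $1\le m<n$, $D_Y(m,n)=1+\sum_{j=m+1}^{n-1}\prod_{i=m+1}^j\varrho_i^{-1}$. For $n>m\ge1$, $F_X(m,n)=1+\sum_{s=m+1}^{n-1}\mathbf e_1A_s\cdots A_{m+1}\mathbf e_1^t$ and $F_X(m)=\lim_{n\to\infty}F_X(m,n)$. For $2\le k\le n$,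 $\zeta_{k,n}=\frac{\mathbf e_1A_{k+1}\cdots A_n\mathbf e_1^t}{\mathbf e_1A_k\cdots A_n\mathbf e_1^t}$ and $\zeta_k=\lim_{n\to\infty}\zeta_{k,n}$ (which exists under the hypotheses); $F_Y(m,n)=1+\sum_{j=m+1}^{n-1}\prod_{i=m+1}^j\zeta_i$ and $F_Y(m)=\lim_{n\to\infty}F_Y(m,n)$. All these limits are monotone limits in $[1,\infty]$. *)

theory Defs
  imports "HOL-Analysis.Analysis" "HOL-Library.Extended_Nonnegative_Real"
begin

definition aa :: "(nat \<Rightarrow> real) \<Rightarrow> (nat \<Rightarrow> real) \<Rightarrow> (nat \<Rightarrow> real) \<Rightarrow> nat \<Rightarrow> real" where
  "aa q p1 p2 k = (p1 k + p2 k) / q k"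

definition bb :: "(nat \<Rightarrow> real) \<Rightarrow> (nat \<Rightarrow> real) \<Rightarrow> (nat \<Rightarrow> real) \<Rightarrow> nat \<Rightarrow> real" where
  "bb q p1 p2 k = p2 k / q k"

definition AA :: "(nat \<Rightarrow> real) \<Rightarrow> (nat \<Rightarrow> real) \<Rightarrow> (nat \<Rightarrow> real) \<Rightarrow> nat \<Rightarrow> real^2^2" where
  "AA q p1 p2 k = (\<chi> i j. if i = 1 then (if j = 1 then aa q p1 p2 k else bb q p1 p2 k)
                          else (if j = 1 then 1 else 0))"

definition rho :: "(nat \<Rightarrow> real) \<Rightarrow> (nat \<Rightarrow> real) \<Rightarrow> (nat \<Rightarrow> real) \<Rightarrow> nat \<Rightarrow> real" where
  "rho q p1 p2 k = (aa q p1 p2 k + sqrt ((aa q p1 p2 k)^2 + 4 * bb q p1 p2 k)) / 2"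

definition mprod_up :: "(nat \<Rightarrow> real^2^2) \<Rightarrow> nat \<Rightarrow> nat \<Rightarrow> real^2^2" where
  "mprod_up M i j = foldr (**) (map M [i..<Suc j]) (mat 1)"

definition mprod_down :: "(nat \<Rightarrow> real^2^2) \<Rightarrow> nat \<Rightarrow> nat \<Rightarrow> real^2^2" where
  "mprod_down M j i = foldr (**) (rev (map M [i..<Suc j])) (mat 1)"

text \<open>e_1 M e_1^t is the (1,1) entry.\<close>
definition e11 :: "real^2^2 \<Rightarrow> real" where
  "e11 M = M $ 1 $ 1"

definition DX :: "(nat \<Rightarrow> real) \<Rightarrow> (nat \<Rightarrow> real) \<Rightarrow> (nat \<Rightarrow> real) \<Rightarrow> nat \<Rightarrow> ennreal" where
  "DX q p1 p2 n = 1 + (\<Sum>j. ennreal (\<Prod>i\<in>{n+1..n+1+j}. rho q p1 p2 i))"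

definition DY :: "(nat \<Rightarrow> real) \<Rightarrow> (nat \<Rightarrow> real) \<Rightarrow> (nat \<Rightarrow> real) \<Rightarrow> nat \<Rightarrow> ennreal" where
  "DY q p1 p2 n = 1 + (\<Sum>j. ennreal (\<Prod>i\<in>{n+1..n+1+j}. inverse (rho q p1 p2 i)))"

definition DY2 :: "(nat \<Rightarrow> real) \<Rightarrow> (nat \<Rightarrow> real) \<Rightarrow> (nat \<Rightarrow> real) \<Rightarrow> nat \<Rightarrow> nat \<Rightarrow> ennreal" where
  "DY2 q p1 p2 m n = 1 + (\<Sum>j\<in>{m+1..<n}. ennreal (\<Prod>i\<in>{m+1..j}. inverse (rho q p1 p2 i)))"

definition FX2 :: "(nat \<Rightarrow> real) \<Rightarrow> (nat \<Rightarrow> real) \<Rightarrow> (nat \<Rightarrow> real) \<Rightarrow> nat \<Rightarrow> nat \<Rightarrow> ennreal" where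
  "FX2 q p1 p2 m n = 1 + (\<Sum>s\<in>{m+1..<n}. ennreal (e11 (mprod_down (AA q p1 p2) s (m+1))))"

definition FX :: "(nat \<Rightarrow> real) \<Rightarrow> (nat \<Rightarrow> real) \<Rightarrow> (nat \<Rightarrow> real) \<Rightarrow> nat \<Rightarrow> ennreal" where
  "FX q p1 p2 m = (SUP n\<in>{m<..}. FX2 q p1 p2 m n)"

definition zeta2 :: "(nat \<Rightarrow> real) \<Rightarrow> (nat \<Rightarrow> real) \<Rightarrow> (nat \<Rightarrow> real) \<Rightarrow> nat \<Rightarrow> nat \<Rightarrow> real" where
  "zeta2 q p1 p2 k n = e11 (mprod_up (AA q p1 p2) (k+1) n) / e11 (mprod_up (AA q p1 p2) k n)"

definition zeta :: "(nat \<Rightarrow> real) \<Rightarrow> (nat \<Rightarrow> real) \<Rightarrow> (nat \<Rightarrow> real) \<Rightarrow> nat \<Rightarrow> real" where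
  "zeta q p1 p2 k = lim (\<lambda>n. zeta2 q p1 p2 k n)"

definition FY2 :: "(nat \<Rightarrow> real) \<Rightarrow> (nat \<Rightarrow> real) \<Rightarrow> (nat \<Rightarrow> real) \<Rightarrow> nat \<Rightarrow> nat \<Rightarrow> ennreal" where
  "FY2 q p1 p2 m n = 1 + (\<Sum>j\<in>{m+1..<n}. ennreal (\<Prod>i\<in>{m+1..j}. zeta q p1 p2 i))"

definition FY :: "(nat \<Rightarrow> real) \<Rightarrow> (nat \<Rightarrow> real) \<Rightarrow> (nat \<Rightarrow> real) \<Rightarrow> nat \<Rightarrow> ennreal" where
  "FY q p1 p2 m = (SUP n\<in>{m<..}. FY2 q p1 p2 m n)"

end

theory Submission
  imports Defs
begin

text \<open>
  Write the first column of a product of the matrices \<open>A\<^sub>k\<close> as \<open>(x, y)\<close>. Since \<open>\<rho>\<^sub>k\<close> is the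
  positive root of \<open>t\<^sup>2 = a\<^sub>k t + b\<^sub>k\<close>, the bounds \<open>L (r, 1) \<le> (x, y) \<le> U (r, 1)\<close> survive
  one more factor \<open>A\<^sub>k\<close> with \<open>r\<close> replaced by \<open>\<rho>\<^sub>k\<close>, \<open>L\<close> multiplied by \<open>min r \<rho>\<^sub>k\<close> and \<open>U\<close> by
  \<open>max r \<rho>\<^sub>k\<close>. As \<open>\<rho>\<close> is bounded away from \<open>0\<close> and \<open>\<infinity>\<close> and eventually monotone, the
  products of the minima and maxima of consecutive \<open>\<rho>\<^sub>l\<close> telescope to within constant factors
  of the products of the \<open>\<rho>\<^sub>l\<close>. So \<open>e\<^sub>1 A\<^sub>s \<cdots> A\<^bsub>m+1\<^esub> e\<^sub>1\<^sup>t\<close> is comparable to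
  \<open>\<rho>\<^bsub>m+1\<^esub> \<cdots> \<rho>\<^sub>s\<close>, which compares \<open>F\<^sub>X\<close> with \<open>D\<^sub>X\<close>, and likewise for \<open>A\<^sub>k \<cdots> A\<^sub>n\<close>.
  The Casoratian of the latter recursion is \<open>b\<^sub>k \<cdots> b\<^sub>n\<close>, and \<open>b\<^sub>l \<le> (1 - \<alpha>/M) \<rho>\<^sub>l\<^sup>2\<close>, so
  \<open>\<zeta>\<^bsub>k,n\<^esub>\<close> converges geometrically fast; products of the \<open>\<zeta>\<^bsub>k,n\<^esub>\<close> telescope to
  ratios of such entries, so products of the \<open>\<zeta>\<^sub>k\<close> are comparable to products of the
  \<open>1/\<rho>\<^sub>k\<close>, which compares \<open>F\<^sub>Y\<close> with \<open>D\<^sub>Y\<close>. Monotonicity of \<open>D\<^sub>X\<close>, \<open>D\<^sub>Y\<close> holds termwise.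
\<close>

definition sandwiched :: "real \<Rightarrow> real \<Rightarrow> real \<Rightarrow> real \<Rightarrow> real \<Rightarrow> bool" where
  "sandwiched L U r x y \<longleftrightarrow> L * r \<le> x \<and> x \<le> U * r \<and> L \<le> y \<and> y \<le> U"

lemma positive_root_affine_bounds:
  fixes a b r r' :: real
  assumes "0 \<le> a" "0 \<le> b" "0 < r'" "r'^2 = a * r' + b"
  shows "min r r' * r' \<le> a * r + b" "a * r + b \<le> max r r' * r'"
proof -
  have b_eq: "b = r' * (r' - a)" using assms(4) by (simp add: power2_eq_square algebra_simps)
  then have "0 \<le> r' - a" using assms(2,3) by (simp add: zero_le_mult_iff)
  have via_r: "a * r + b = r * r' + (r' - r) * (r' - a)" and via_r': "a * r + b = r' * r' + a * (r - r')"
    unfolding b_eq by (simp_all add: algebra_simps)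
  have "min r r' * r' \<le> a * r + b \<and> a * r + b \<le> max r r' * r'"
  proof (cases "r \<le> r'")
    case True
    then have "0 \<le> (r' - r) * (r' - a)" "a * (r - r') \<le> 0"
      using \<open>0 \<le> r' - a\<close> assms(1) by (simp_all add: mult_nonneg_nonpos)
    then show ?thesis using True via_r via_r' by (simp add: min_def max_def mult.commute)
  next
    case False
    then have "(r' - r) * (r' - a) \<le> 0" "0 \<le> a * (r - r')"
      using \<open>0 \<le> r' - a\<close> assms(1) by (simp_all add: mult_nonpos_nonneg)
    then show ?thesis using False via_r via_r' by (simp add: min_def max_def mult.commute)
  qed
  then show "min r r' * r' \<le> a * r + b" "a * r + b \<le> max r r' * r'" by auto
qed

lemma sandwiched_step:
  assumes sw: "sandwiched L U r x y" and "0 \<le> L" "0 < r"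
    and "0 \<le> a" "0 \<le> b" "0 < r'" "r'^2 = a * r' + b"
  shows "sandwiched (L * min r r') (U * max r r') r' (a * x + b * y) x"
proof -
  note root = positive_root_affine_bounds[OF assms(4-7), of r]
  have x: "L * r \<le> x" "x \<le> U * r" and y: "L \<le> y" "y \<le> U"
    using sw unfolding sandwiched_def by auto
  have "L \<le> U" using x \<open>0 < r\<close> by (meson mult_right_le_imp_le order_trans)
  then have "0 \<le> U" using \<open>0 \<le> L\<close> by linarith
  have "L * min r r' * r' \<le> L * (a * r + b)"
    using mult_left_mono[OF root(1) \<open>0 \<le> L\<close>] by (simp add: mult.assoc)
  also have "\<dots> \<le> a * x + b * y"
    using mult_left_mono[OF x(1) \<open>0 \<le> a\<close>] mult_left_mono[OF y(1) \<open>0 \<le> b\<close>]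
    by (simp add: algebra_simps)
  finally have lower: "L * min r r' * r' \<le> a * x + b * y" .
  have "a * x + b * y \<le> U * (a * r + b)"
    using mult_left_mono[OF x(2) \<open>0 \<le> a\<close>] mult_left_mono[OF y(2) \<open>0 \<le> b\<close>]
    by (simp add: algebra_simps)
  also have "\<dots> \<le> U * max r r' * r'"
    using mult_left_mono[OF root(2) \<open>0 \<le> U\<close>] by (simp add: mult.assoc)
  finally have upper: "a * x + b * y \<le> U * max r r' * r'" .
  have "L * min r r' \<le> x"
    using x(1) mult_left_mono[OF min.cobounded1[of r r'] \<open>0 \<le> L\<close>] by linarith
  moreover have "x \<le> U * max r r'"
    using x(2) mult_left_mono[OF max.cobounded1[of r r'] \<open>0 \<le> U\<close>] by linarith
  ultimately show ?thesis using lower upper unfolding sandwiched_def by blast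
qed

lemma sandwiched_forward:
  fixes a b r x y :: "nat \<Rightarrow> real"
  assumes coeffs: "\<And>l. n0 \<le> l \<Longrightarrow> 0 \<le> a l \<and> 0 \<le> b l \<and> 0 < r l \<and> (r l)^2 = a l * r l + b l"
    and rec: "\<And>s. n0 \<le> s \<Longrightarrow> x (Suc s) = a (Suc s) * x s + b (Suc s) * y s \<and> y (Suc s) = x s"
    and start: "sandwiched L U (r n0) (x n0) (y n0)" and "0 \<le> L" and "n0 \<le> s"
  shows "sandwiched (L * (\<Prod>l\<in>{n0..<s}. min (r l) (r (Suc l))))
           (U * (\<Prod>l\<in>{n0..<s}. max (r l) (r (Suc l)))) (r s) (x s) (y s)"
  using \<open>n0 \<le> s\<close>
proof (induction s rule: dec_induct)
  case base
  show ?case using start by simp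
next
  case (step s)
  have "0 \<le> L * (\<Prod>l\<in>{n0..<s}. min (r l) (r (Suc l)))"
    using coeffs \<open>0 \<le> L\<close> by (auto intro!: prod_nonneg mult_nonneg_nonneg simp: less_imp_le)
  from sandwiched_step[OF step.IH this] coeffs[of s] coeffs[of "Suc s"] step.hyps
  show ?case using rec[OF step.hyps(1)] by (simp add: prod.atLeastLessThan_Suc mult.assoc)
qed

lemma sandwiched_backward:
  fixes a b r x y :: "nat \<Rightarrow> real"
  assumes coeffs: "\<And>l. lo \<le> l \<Longrightarrow> 0 \<le> a l \<and> 0 \<le> b l \<and> 0 < r l \<and> (r l)^2 = a l * r l + b l"
    and rec: "\<And>k. lo \<le> k \<Longrightarrow> k < n \<Longrightarrow> x k = a k * x (Suc k) + b k * y (Suc k) \<and> y k = x (Suc k)"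
    and start: "sandwiched L U (r n) (x n) (y n)" and "0 \<le> L" and "lo \<le> k" "k \<le> n"
  shows "sandwiched (L * (\<Prod>l\<in>{k..<n}. min (r l) (r (Suc l))))
           (U * (\<Prod>l\<in>{k..<n}. max (r l) (r (Suc l)))) (r k) (x k) (y k)"
  using \<open>k \<le> n\<close> \<open>lo \<le> k\<close>
proof (induction k rule: inc_induct)
  case base
  show ?case using start by simp
next
  case (step k)
  have "0 \<le> L * (\<Prod>l\<in>{Suc k..<n}. min (r l) (r (Suc l)))"
    using coeffs step.prems \<open>0 \<le> L\<close> by (auto intro!: prod_nonneg mult_nonneg_nonneg simp: less_imp_le)
  from sandwiched_step[OF step.IH this] coeffs[of k] coeffs[of "Suc k"] step.prems
  show ?case using rec[OF step.prems step.hyps(2)] step.hyps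
    by (simp add: prod.atLeast_Suc_lessThan min.commute max.commute mult_ac)
qed

lemma min_one_mult:
  fixes x y :: real
  assumes "(1 \<le> x \<and> 1 \<le> y) \<or> (x \<le> 1 \<and> y \<le> 1)" "0 \<le> x" "0 \<le> y"
  shows "min 1 x * min 1 y = min 1 (x * y)"
proof (cases "1 \<le> x \<and> 1 \<le> y")
  case True
  then have "1 * 1 \<le> x * y" by (intro mult_mono) auto
  then show ?thesis using True by simp
next
  case False
  then have "x \<le> 1" "y \<le> 1" using assms(1) by auto
  moreover have "x * y \<le> 1 * 1" using calculation assms by (intro mult_mono) auto
  ultimately show ?thesis by (simp add: min_absorb2)
qed

lemma prod_min_one_ratio_telescope:
  fixes r :: "nat \<Rightarrow> real"
  assumes mono: "mono_on {p..} r \<or> antimono_on {p..} r" and pos: "\<And>l. p \<le> l \<Longrightarrow> 0 < r l"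
    and "p \<le> j"
  shows "(\<Prod>l\<in>{p..<j}. min 1 (r (Suc l) / r l)) = min 1 (r j / r p) \<and>
         (\<Prod>l\<in>{p..<j}. min 1 (r l / r (Suc l))) = min 1 (r p / r j)"
  using \<open>p \<le> j\<close>
proof (induction j rule: dec_induct)
  case base
  show ?case using pos[of p] by simp
next
  case (step j)
  have pj: "0 < r p" "0 < r j" "0 < r (Suc j)" using pos step.hyps by auto
  have "(r p \<le> r j \<and> r j \<le> r (Suc j)) \<or> (r j \<le> r p \<and> r (Suc j) \<le> r j)"
    using mono step.hyps by (auto simp: monotone_on_def)
  then have same_side:
    "(1 \<le> r j / r p \<and> 1 \<le> r (Suc j) / r j) \<or> (r j / r p \<le> 1 \<and> r (Suc j) / r j \<le> 1)"
    "(1 \<le> r p / r j \<and> 1 \<le> r j / r (Suc j)) \<or> (r p / r j \<le> 1 \<and> r j / r (Suc j) \<le> 1)"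
    using pj by (auto simp: divide_le_eq le_divide_eq)
  have "min 1 (r j / r p) * min 1 (r (Suc j) / r j) = min 1 (r (Suc j) / r p)"
    using min_one_mult[OF same_side(1)] pj by simp
  moreover have "min 1 (r p / r j) * min 1 (r j / r (Suc j)) = min 1 (r p / r (Suc j))"
    using min_one_mult[OF same_side(2)] pj by simp
  ultimately show ?case using step.IH step.hyps by (simp add: prod.atLeastLessThan_Suc)
qed

lemma prod_lower_bound_head_tail:
  fixes g :: "nat \<Rightarrow> real"
  assumes factor: "\<And>l. i \<le> l \<Longrightarrow> c \<le> g l" and "0 < c" "c \<le> 1"
    and tail: "\<And>p. i \<le> p \<Longrightarrow> N \<le> p \<Longrightarrow> p \<le> j \<Longrightarrow> c \<le> (\<Prod>l\<in>{p..<j}. g l)"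
  shows "c^(N+1) \<le> (\<Prod>l\<in>{i..<j}. g l)"
proof -
  have head: "c^N \<le> (\<Prod>l\<in>{i..<p}. g l)" if "p - i \<le> N" for p
  proof -
    have "c^N \<le> c^(p - i)" using that \<open>0 < c\<close> \<open>c \<le> 1\<close> by (intro power_decreasing) auto
    also have "\<dots> = (\<Prod>l\<in>{i..<p}. c)" by simp
    also have "\<dots> \<le> (\<Prod>l\<in>{i..<p}. g l)" using factor \<open>0 < c\<close> by (intro prod_mono) auto
    finally show ?thesis .
  qed
  show ?thesis
  proof (cases "max i N \<le> j")
    case True
    define p where "p = max i N"
    have "0 \<le> (\<Prod>l\<in>{i..<p}. g l)"
      using factor \<open>0 < c\<close> by (intro prod_nonneg) (auto intro: order_trans[OF less_imp_le])
    then have "c^N * c \<le> (\<Prod>l\<in>{i..<p}. g l) * (\<Prod>l\<in>{p..<j}. g l)"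
      using head[of p] tail[of p] True \<open>0 < c\<close> unfolding p_def by (intro mult_mono) auto
    also have "\<dots> = (\<Prod>l\<in>{i..<j}. g l)"
      using True unfolding p_def by (intro prod.atLeastLessThan_concat) auto
    finally show ?thesis by (simp add: mult.commute)
  next
    case False
    have "c^(N+1) \<le> c^N" using \<open>0 < c\<close> \<open>c \<le> 1\<close> by (intro power_decreasing) auto
    then show ?thesis using head[of j] False by linarith
  qed
qed

lemma prod_min_max_consecutive_bounds:
  fixes r :: "nat \<Rightarrow> real"
  assumes bounds: "\<And>l. i \<le> l \<Longrightarrow> \<mu> \<le> r l \<and> r l \<le> M" and "0 < \<mu>"
    and mono: "mono_on {N..} r \<or> antimono_on {N..} r"
  shows "(\<mu>/M)^(N+1) * (\<Prod>l\<in>{i..<j}. r l) \<le> (\<Prod>l\<in>{i..<j}. min (r l) (r (Suc l)))"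
    and "(\<Prod>l\<in>{i..<j}. max (r l) (r (Suc l))) \<le> (\<Prod>l\<in>{i..<j}. r l) / (\<mu>/M)^(N+1)"
proof -
  have pos: "0 < r l" if "i \<le> l" for l using bounds[OF that] \<open>0 < \<mu>\<close> by linarith
  have ratio: "\<mu>/M \<le> min 1 (r l' / r l)" if "i \<le> l" "i \<le> l'" for l l'
    using bounds[OF that(1)] bounds[OF that(2)] \<open>0 < \<mu>\<close> by (auto intro: frac_le)
  have c: "0 < \<mu>/M" "\<mu>/M \<le> 1" using bounds[of i] \<open>0 < \<mu>\<close> by auto
  have tail: "\<mu>/M \<le> (\<Prod>l\<in>{p..<j}. min 1 (r (Suc l) / r l)) \<and>
              \<mu>/M \<le> (\<Prod>l\<in>{p..<j}. min 1 (r l / r (Suc l)))" if "i \<le> p" "N \<le> p" "p \<le> j" for p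
  proof -
    have "{p..} \<subseteq> {N..}" using that(2) by auto
    then have "mono_on {p..} r \<or> antimono_on {p..} r"
      using mono by (meson monotone_on_subset)
    then show ?thesis using prod_min_one_ratio_telescope[of p r j] pos ratio that by auto
  qed
  have lower: "(\<mu>/M)^(N+1) \<le> (\<Prod>l\<in>{i..<j}. min 1 (r (Suc l) / r l))"
    "(\<mu>/M)^(N+1) \<le> (\<Prod>l\<in>{i..<j}. min 1 (r l / r (Suc l)))"
    by (rule prod_lower_bound_head_tail[OF _ c]; use ratio tail in simp)+
  have R: "0 \<le> (\<Prod>l\<in>{i..<j}. r l)" using pos by (intro prod_nonneg) (simp add: less_imp_le)
  have "min (r l) (r (Suc l)) = r l * min 1 (r (Suc l) / r l)"
    "max (r l) (r (Suc l)) = r l / min 1 (r l / r (Suc l))" if "i \<le> l" for l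
    using pos[of l] pos[of "Suc l"] that by (simp_all add: min_mult_distrib_left min_def max_def field_simps)
  then have "(\<Prod>l\<in>{i..<j}. min (r l) (r (Suc l))) = (\<Prod>l\<in>{i..<j}. r l) * (\<Prod>l\<in>{i..<j}. min 1 (r (Suc l) / r l))"
    and max_eq: "(\<Prod>l\<in>{i..<j}. max (r l) (r (Suc l))) = (\<Prod>l\<in>{i..<j}. r l) / (\<Prod>l\<in>{i..<j}. min 1 (r l / r (Suc l)))"
    unfolding prod.distrib[symmetric] prod_dividef[symmetric] by (auto intro: prod.cong)
  then show "(\<mu>/M)^(N+1) * (\<Prod>l\<in>{i..<j}. r l) \<le> (\<Prod>l\<in>{i..<j}. min (r l) (r (Suc l)))"
    using mult_left_mono[OF lower(1) R] by (simp add: mult.commute)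
  have "(\<Prod>l\<in>{i..<j}. r l) / (\<Prod>l\<in>{i..<j}. min 1 (r l / r (Suc l)))
      \<le> (\<Prod>l\<in>{i..<j}. r l) / (\<mu>/M)^(N+1)"
  proof (rule divide_left_mono[OF lower(2) R])
    have "0 < (\<mu>/M)^(N+1)" using c(1) by (rule zero_less_power)
    then show "0 < (\<Prod>l\<in>{i..<j}. min 1 (r l / r (Suc l))) * (\<mu>/M)^(N+1)"
      using lower(2) by (intro mult_pos_pos) linarith+
  qed
  then show "(\<Prod>l\<in>{i..<j}. max (r l) (r (Suc l))) \<le> (\<Prod>l\<in>{i..<j}. r l) / (\<mu>/M)^(N+1)"
    unfolding max_eq .
qed

lemma ennreal_one_plus_scaled_bounds:
  fixes S S' :: ennreal
  assumes "c \<le> 1" "1 \<le> C" "ennreal c * S \<le> S'" "S' \<le> ennreal C * S"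
  shows "ennreal c * (1 + S) \<le> 1 + S'" "1 + S' \<le> ennreal C * (1 + S)"
proof -
  have "ennreal c * (1 + S) = ennreal c + ennreal c * S" by (simp add: distrib_left)
  also have "\<dots> \<le> 1 + S'" using assms(1,3) by (intro add_mono) auto
  finally show "ennreal c * (1 + S) \<le> 1 + S'" .
  have "1 + S' \<le> ennreal C + ennreal C * S" using assms(2,4) by (intro add_mono) auto
  also have "\<dots> = ennreal C * (1 + S)" by (simp add: distrib_left)
  finally show "1 + S' \<le> ennreal C * (1 + S)" .
qed

lemma one_plus_suminf_ennreal_bounds:
  fixes u v :: "nat \<Rightarrow> real"
  assumes "0 \<le> c" "c \<le> 1" "1 \<le> C" "\<And>j. 0 \<le> u j" "\<And>j. c * u j \<le> v j \<and> v j \<le> C * u j"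
  shows "ennreal c * (1 + (\<Sum>j. ennreal (u j))) \<le> 1 + (\<Sum>j. ennreal (v j))"
    "1 + (\<Sum>j. ennreal (v j)) \<le> ennreal C * (1 + (\<Sum>j. ennreal (u j)))"
proof -
  have "ennreal c * (\<Sum>j. ennreal (u j)) = (\<Sum>j. ennreal (c * u j))"
    using assms(1,4) by (simp add: ennreal_mult)
  also have "\<dots> \<le> (\<Sum>j. ennreal (v j))" using assms(5) by (intro suminf_le ennreal_leI) auto
  finally have lower: "ennreal c * (\<Sum>j. ennreal (u j)) \<le> (\<Sum>j. ennreal (v j))" .
  have "(\<Sum>j. ennreal (v j)) \<le> (\<Sum>j. ennreal (C * u j))" using assms(5) by (intro suminf_le ennreal_leI) auto
  also have "\<dots> = ennreal C * (\<Sum>j. ennreal (u j))" using assms(3,4) by (simp add: ennreal_mult)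
  finally show "ennreal c * (1 + (\<Sum>j. ennreal (u j))) \<le> 1 + (\<Sum>j. ennreal (v j))"
    "1 + (\<Sum>j. ennreal (v j)) \<le> ennreal C * (1 + (\<Sum>j. ennreal (u j)))"
    using ennreal_one_plus_scaled_bounds[OF assms(2,3) lower] by auto
qed

lemma one_plus_sum_ennreal_bounds:
  fixes u v :: "nat \<Rightarrow> real"
  assumes "0 \<le> c" "c \<le> 1" "1 \<le> C" "\<And>j. j \<in> A \<Longrightarrow> 0 \<le> u j"
    "\<And>j. j \<in> A \<Longrightarrow> c * u j \<le> v j \<and> v j \<le> C * u j"
  shows "ennreal c * (1 + (\<Sum>j\<in>A. ennreal (u j))) \<le> 1 + (\<Sum>j\<in>A. ennreal (v j))"
    "1 + (\<Sum>j\<in>A. ennreal (v j)) \<le> ennreal C * (1 + (\<Sum>j\<in>A. ennreal (u j)))"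
proof -
  have "ennreal c * (\<Sum>j\<in>A. ennreal (u j)) = (\<Sum>j\<in>A. ennreal (c * u j))"
    unfolding sum_distrib_left by (intro sum.cong refl) (simp add: assms(1,4) ennreal_mult)
  also have "\<dots> \<le> (\<Sum>j\<in>A. ennreal (v j))" using assms(5) by (intro sum_mono ennreal_leI) auto
  finally have lower: "ennreal c * (\<Sum>j\<in>A. ennreal (u j)) \<le> (\<Sum>j\<in>A. ennreal (v j))" .
  have "(\<Sum>j\<in>A. ennreal (v j)) \<le> (\<Sum>j\<in>A. ennreal (C * u j))" using assms(5) by (intro sum_mono ennreal_leI) auto
  also have "\<dots> = ennreal C * (\<Sum>j\<in>A. ennreal (u j))"
    unfolding sum_distrib_left using assms(3) by (intro sum.cong refl) (simp add: assms(4) ennreal_mult)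
  finally show "ennreal c * (1 + (\<Sum>j\<in>A. ennreal (u j))) \<le> 1 + (\<Sum>j\<in>A. ennreal (v j))"
    "1 + (\<Sum>j\<in>A. ennreal (v j)) \<le> ennreal C * (1 + (\<Sum>j\<in>A. ennreal (u j)))"
    using ennreal_one_plus_scaled_bounds[OF assms(2,3) lower] by auto
qed

lemma SUP_one_plus_partial_sums:
  fixes f :: "nat \<Rightarrow> ennreal"
  shows "(SUP n\<in>{m<..}. 1 + (\<Sum>s\<in>{m+1..<n}. f s)) = 1 + (\<Sum>j. f (m+1+j))"
proof -
  have "{m<..} = range (\<lambda>N. m+1+N)"
  proof (intro set_eqI iffI)
    fix n assume "n \<in> {m<..}"
    then show "n \<in> range (\<lambda>N. m+1+N)" by (intro image_eqI[of _ _ "n - Suc m"]) auto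
  qed auto
  moreover have "(\<Sum>s\<in>{m+1..<m+1+N}. f s) = (\<Sum>j<N. f (m+1+j))" for N
    using sum.shift_bounds_nat_ivl[of f 0 "m+1" N] by (simp add: atLeast0LessThan add.commute)
  ultimately have "(SUP n\<in>{m<..}. 1 + (\<Sum>s\<in>{m+1..<n}. f s)) = (SUP N. 1 + (\<Sum>j<N. f (m+1+j)))"
    by (simp add: image_image)
  also have "\<dots> = 1 + (\<Sum>j. f (m+1+j))"
    by (simp add: suminf_eq_SUP ennreal_SUP_add_right)
  finally show ?thesis .
qed

lemma suminf_tail_products_le:
  fixes f :: "nat \<Rightarrow> real"
  assumes "\<And>u. 0 \<le> f (n+1+u)" "\<And>u. f (n+1+u) \<le> f (n'+1+u)"
  shows "(\<Sum>j. ennreal (\<Prod>i\<in>{n+1..n+1+j}. f i)) \<le> (\<Sum>j. ennreal (\<Prod>i\<in>{n'+1..n'+1+j}. f i))"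
proof -
  have shift: "(\<Prod>i\<in>{k+1..k+1+j}. f i) = (\<Prod>u\<in>{0..j}. f (k+1+u))" for k j
    using prod.atLeastAtMost_shift_0[of "k+1" "k+1+j" f] by (simp add: comp_def)
  show ?thesis
    unfolding shift using assms by (intro suminf_le ennreal_leI prod_mono) auto
qed

lemma mono_on_one_plus_tail_products:
  fixes f :: "nat \<Rightarrow> real"
  assumes "mono_on {N..} f" "\<And>i. N < i \<Longrightarrow> 0 \<le> f i"
  shows "mono_on {N<..} (\<lambda>n. 1 + (\<Sum>j. ennreal (\<Prod>i\<in>{n+1..n+1+j}. f i)))"
  using assms by (intro monotone_onI add_left_mono suminf_tail_products_le) (auto simp: monotone_on_def)

lemma antimono_on_one_plus_tail_products:
  fixes f :: "nat \<Rightarrow> real"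
  assumes "antimono_on {N..} f" "\<And>i. N < i \<Longrightarrow> 0 \<le> f i"
  shows "antimono_on {N<..} (\<lambda>n. 1 + (\<Sum>j. ennreal (\<Prod>i\<in>{n+1..n+1+j}. f i)))"
  using assms by (intro monotone_onI add_left_mono suminf_tail_products_le) (auto simp: monotone_on_def)

lemma antimono_on_inverse:
  fixes f :: "'a :: order \<Rightarrow> real"
  assumes "mono_on S f" "\<And>x. x \<in> S \<Longrightarrow> 0 < f x"
  shows "antimono_on S (\<lambda>x. inverse (f x))"
  using assms by (intro monotone_onI) (auto simp: monotone_on_def intro!: le_imp_inverse_le)

lemma mono_on_inverse:
  fixes f :: "'a :: order \<Rightarrow> real"
  assumes "antimono_on S f" "\<And>x. x \<in> S \<Longrightarrow> 0 < f x"
  shows "mono_on S (\<lambda>x. inverse (f x))"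
  using assms by (intro monotone_onI) (auto simp: monotone_on_def intro!: le_imp_inverse_le)

lemma uniform_lower_bound_of_positive_limit:
  fixes f :: "nat \<Rightarrow> real"
  assumes "f \<longlonglongrightarrow> L" "0 < L" "\<And>k. k0 \<le> k \<Longrightarrow> 0 < f k"
  shows "\<exists>\<alpha>>0. \<forall>k\<ge>k0. \<alpha> \<le> f k"
proof -
  obtain N where N: "\<And>k. N \<le> k \<Longrightarrow> L/2 < f k"
    using order_tendstoD(1)[OF assms(1), of "L/2"] assms(2) by (auto simp: eventually_sequentially)
  define \<alpha> where "\<alpha> = Min (insert (L/2) (f ` {k0..<N}))"
  have "0 < \<alpha>" unfolding \<alpha>_def using assms(2,3) by auto
  moreover have "\<alpha> \<le> f k" if "k0 \<le> k" for k
  proof (cases "k < N")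
    case True
    then show ?thesis unfolding \<alpha>_def using that by (intro Min_le) auto
  next
    case False
    have "\<alpha> \<le> L/2" unfolding \<alpha>_def by (intro Min_le) auto
    moreover have "L/2 < f k" using N False by simp
    ultimately show ?thesis by linarith
  qed
  ultimately show ?thesis by blast
qed

lemma convergent_of_summable_increments:
  fixes t :: "nat \<Rightarrow> real"
  assumes "summable (\<lambda>n. \<bar>t (Suc n) - t n\<bar>)"
  shows "convergent t"
proof -
  have "summable (\<lambda>n. t (Suc n) - t n)" using assms by (rule summable_rabs_cancel)
  then have "convergent (\<lambda>n. t n - t 0)"
    by (simp add: summable_iff_convergent sum_lessThan_telescope)
  then have "convergent (\<lambda>n. (t n - t 0) + t 0)" by (rule convergent_add_const_right_iff[THEN iffD2])
  then show ?thesis by simp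
qed

lemma mprod_down_Suc: "m \<le> Suc s \<Longrightarrow> mprod_down M (Suc s) m = M (Suc s) ** mprod_down M s m"
  unfolding mprod_down_def by (simp add: matrix_mul_assoc)

lemma mprod_down_empty: "mprod_down M s (Suc s) = mat 1"
  unfolding mprod_down_def by simp

lemma mprod_up_Suc: "k \<le> n \<Longrightarrow> mprod_up M k n = M k ** mprod_up M (Suc k) n"
  unfolding mprod_up_def by (cases "k = n") (auto simp: upt_conv_Cons)

lemma mprod_up_empty: "mprod_up M (Suc n) n = mat 1"
  unfolding mprod_up_def by simp

lemma AA_mult_column1:
  "(AA q p1 p2 k ** P) $ 1 $ 1 = aa q p1 p2 k * P $ 1 $ 1 + bb q p1 p2 k * P $ 2 $ 1"
  "(AA q p1 p2 k ** P) $ 2 $ 1 = P $ 1 $ 1"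
  by (simp_all add: matrix_matrix_mult_def sum_2 AA_def)

locale companion_coefficients =
  fixes q p1 p2 :: "nat \<Rightarrow> real" and \<alpha> M :: real and N0 :: nat
  assumes alpha_pos: "0 < \<alpha>"
    and aa_ge: "\<And>k. 2 \<le> k \<Longrightarrow> \<alpha> \<le> aa q p1 p2 k"
    and bb_nonneg: "\<And>k. 2 \<le> k \<Longrightarrow> 0 \<le> bb q p1 p2 k"
    and rho_le: "\<And>k. 2 \<le> k \<Longrightarrow> rho q p1 p2 k \<le> M"
    and N0_ge: "2 \<le> N0"
    and rho_monotone: "mono_on {N0..} (rho q p1 p2) \<or> antimono_on {N0..} (rho q p1 p2)"
begin

abbreviation "a \<equiv> aa q p1 p2"
abbreviation "b \<equiv> bb q p1 p2"
abbreviation "\<rho> \<equiv> rho q p1 p2"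
abbreviation "A \<equiv> AA q p1 p2"

lemma rho_root:
  assumes "2 \<le> k"
  shows "0 \<le> a k \<and> 0 \<le> b k \<and> 0 < \<rho> k \<and> (\<rho> k)^2 = a k * \<rho> k + b k"
    and "a k \<le> \<rho> k"
proof -
  define s where "s = sqrt ((a k)^2 + 4 * b k)"
  have "0 < a k" "0 \<le> b k" using aa_ge[OF assms] bb_nonneg[OF assms] alpha_pos by auto
  then have "a k \<le> s" and s_sq: "s^2 = (a k)^2 + 4 * b k" unfolding s_def by (auto intro: real_le_rsqrt)
  have rho_eq: "\<rho> k = (a k + s) / 2" unfolding rho_def s_def ..
  have "(\<rho> k)^2 = a k * \<rho> k + b k"
    unfolding rho_eq by (simp add: power2_eq_square field_simps s_sq[unfolded power2_eq_square])
  then show "a k \<le> \<rho> k" "0 \<le> a k \<and> 0 \<le> b k \<and> 0 < \<rho> k \<and> (\<rho> k)^2 = a k * \<rho> k + b k"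
    using \<open>0 < a k\<close> \<open>0 \<le> b k\<close> \<open>a k \<le> s\<close> unfolding rho_eq by auto
qed

lemma rho_bounds: "2 \<le> k \<Longrightarrow> \<alpha> \<le> \<rho> k \<and> \<rho> k \<le> M"
  using aa_ge rho_root(2) rho_le by (meson order_trans)

lemma alpha_le_M: "\<alpha> \<le> M"
  using rho_bounds[of 2] by simp

lemma prod_rho_pos: "(\<And>l. l \<in> S \<Longrightarrow> 2 \<le> l) \<Longrightarrow> 0 < prod \<rho> S"
  using rho_root(1) by (intro prod_pos) blast

definition \<kappa> :: real where "\<kappa> = (\<alpha>/M)^(N0+1)"

lemma kappa_pos: "0 < \<kappa>"
  unfolding \<kappa>_def using alpha_pos alpha_le_M by simp

lemma prod_min_max_rho:
  assumes "2 \<le> i"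
  shows "\<kappa> * (\<Prod>l\<in>{i..<j}. \<rho> l) \<le> (\<Prod>l\<in>{i..<j}. min (\<rho> l) (\<rho> (Suc l)))"
    and "(\<Prod>l\<in>{i..<j}. max (\<rho> l) (\<rho> (Suc l))) \<le> (\<Prod>l\<in>{i..<j}. \<rho> l) / \<kappa>"
  using prod_min_max_consecutive_bounds[OF _ alpha_pos rho_monotone, of i] rho_bounds assms
  unfolding \<kappa>_def by auto

lemma sandwiched_start: "2 \<le> k \<Longrightarrow> sandwiched (\<alpha>/M) 1 (\<rho> k) (a k) 1"
  using rho_root[of k] rho_bounds[of k] aa_ge[of k] alpha_pos
  unfolding sandwiched_def by (auto simp: field_simps intro: order_trans[OF mult_left_mono])

lemma sandwiched_rho_products:
  assumes "2 \<le> i" "0 \<le> r"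
    and "sandwiched (\<alpha>/M * (\<Prod>l\<in>{i..<j}. min (\<rho> l) (\<rho> (Suc l))))
           (1 * (\<Prod>l\<in>{i..<j}. max (\<rho> l) (\<rho> (Suc l)))) r x y"
  shows "\<alpha>/M * \<kappa> * (\<Prod>l\<in>{i..<j}. \<rho> l) * r \<le> x" "x \<le> (\<Prod>l\<in>{i..<j}. \<rho> l) / \<kappa> * r"
proof -
  note bounds = prod_min_max_rho[OF assms(1), of j]
  have "0 \<le> \<alpha>/M" using alpha_pos alpha_le_M by simp
  have "\<alpha>/M * \<kappa> * (\<Prod>l\<in>{i..<j}. \<rho> l) * r = \<alpha>/M * (\<kappa> * (\<Prod>l\<in>{i..<j}. \<rho> l)) * r"
    by (simp add: mult_ac)
  also have "\<dots> \<le> \<alpha>/M * (\<Prod>l\<in>{i..<j}. min (\<rho> l) (\<rho> (Suc l))) * r"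
    using bounds(1) \<open>0 \<le> \<alpha>/M\<close> \<open>0 \<le> r\<close> by (intro mult_right_mono mult_left_mono)
  also have "\<dots> \<le> x" using assms(3) unfolding sandwiched_def by simp
  finally show "\<alpha>/M * \<kappa> * (\<Prod>l\<in>{i..<j}. \<rho> l) * r \<le> x" .
  have "x \<le> (\<Prod>l\<in>{i..<j}. max (\<rho> l) (\<rho> (Suc l))) * r" using assms(3) unfolding sandwiched_def by simp
  also have "\<dots> \<le> (\<Prod>l\<in>{i..<j}. \<rho> l) / \<kappa> * r" using bounds(2) \<open>0 \<le> r\<close> by (rule mult_right_mono)
  finally show "x \<le> (\<Prod>l\<in>{i..<j}. \<rho> l) / \<kappa> * r" .
qed

definition X :: "nat \<Rightarrow> nat \<Rightarrow> real" where "X m s = e11 (mprod_down A s (m+1))"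
definition Y :: "nat \<Rightarrow> nat \<Rightarrow> real" where "Y m s = mprod_down A s (m+1) $ 2 $ 1"

lemma X_Y_Suc: "m \<le> s \<Longrightarrow> X m (Suc s) = a (Suc s) * X m s + b (Suc s) * Y m s \<and> Y m (Suc s) = X m s"
  unfolding X_def Y_def e11_def by (simp add: mprod_down_Suc AA_mult_column1)

lemma X_Y_first: "X m (Suc m) = a (Suc m) \<and> Y m (Suc m) = 1"
  using X_Y_Suc[of m m] unfolding X_def Y_def e11_def by (simp add: mprod_down_empty mat_def)

lemma X_bounds:
  "\<exists>c>0. \<exists>C. \<forall>m s. 1 \<le> m \<longrightarrow> m < s \<longrightarrow>
     c * (\<Prod>i\<in>{m+1..s}. \<rho> i) \<le> X m s \<and> X m s \<le> C * (\<Prod>i\<in>{m+1..s}. \<rho> i)"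
proof (intro exI conjI allI impI)
  show "0 < \<alpha>/M * \<kappa>" using alpha_pos alpha_le_M kappa_pos by simp
  fix m s :: nat assume "1 \<le> m" "m < s"
  have "sandwiched (\<alpha>/M * (\<Prod>l\<in>{m+1..<s}. min (\<rho> l) (\<rho> (Suc l))))
          (1 * (\<Prod>l\<in>{m+1..<s}. max (\<rho> l) (\<rho> (Suc l)))) (\<rho> s) (X m s) (Y m s)"
    using \<open>1 \<le> m\<close> \<open>m < s\<close> alpha_pos alpha_le_M X_Y_first[of m] sandwiched_start[of "m+1"]
    by (intro sandwiched_forward[where a = a and b = b] rho_root X_Y_Suc) auto
  moreover have "0 \<le> \<rho> s" using rho_root(1)[of s] \<open>1 \<le> m\<close> \<open>m < s\<close> by simp
  ultimately have "\<alpha>/M * \<kappa> * (\<Prod>l\<in>{m+1..<s}. \<rho> l) * \<rho> s \<le> X m s"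
    "X m s \<le> (\<Prod>l\<in>{m+1..<s}. \<rho> l) / \<kappa> * \<rho> s"
    using sandwiched_rho_products[of "m+1"] \<open>1 \<le> m\<close> by auto
  moreover have "(\<Prod>i\<in>{m+1..s}. \<rho> i) = (\<Prod>l\<in>{m+1..<s}. \<rho> l) * \<rho> s"
    using \<open>m < s\<close> by (simp add: atLeastLessThanSuc_atLeastAtMost[symmetric] prod.atLeastLessThan_Suc)
  ultimately show "\<alpha>/M * \<kappa> * (\<Prod>i\<in>{m+1..s}. \<rho> i) \<le> X m s"
    "X m s \<le> 1/\<kappa> * (\<Prod>i\<in>{m+1..s}. \<rho> i)"
    by (simp_all add: mult.assoc)
qed

definition G :: "nat \<Rightarrow> nat \<Rightarrow> real" where "G n k = e11 (mprod_up A k n)"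
definition H :: "nat \<Rightarrow> nat \<Rightarrow> real" where "H n k = mprod_up A k n $ 2 $ 1"

lemma G_H_Suc: "k \<le> n \<Longrightarrow> G n k = a k * G n (Suc k) + b k * H n (Suc k) \<and> H n k = G n (Suc k)"
  unfolding G_def H_def e11_def by (simp add: mprod_up_Suc AA_mult_column1)

lemma G_H_last: "G n n = a n \<and> H n n = 1"
  using G_H_Suc[of n n] unfolding G_def H_def e11_def by (simp add: mprod_up_empty mat_def)

lemma G_bounds:
  "\<exists>c>0. \<exists>C>0. \<forall>n k. 2 \<le> k \<longrightarrow> k \<le> n \<longrightarrow>
     c * (\<Prod>l\<in>{k..<n}. \<rho> l) \<le> G n k \<and> G n k \<le> C * (\<Prod>l\<in>{k..<n}. \<rho> l)"
proof (intro exI conjI allI impI)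
  show "0 < \<alpha>/M * \<kappa> * \<alpha>" "0 < M / \<kappa>" using alpha_pos alpha_le_M kappa_pos by simp_all
  fix n k :: nat assume "2 \<le> k" "k \<le> n"
  have "sandwiched (\<alpha>/M * (\<Prod>l\<in>{k..<n}. min (\<rho> l) (\<rho> (Suc l))))
          (1 * (\<Prod>l\<in>{k..<n}. max (\<rho> l) (\<rho> (Suc l)))) (\<rho> k) (G n k) (H n k)"
  proof (rule sandwiched_backward[where a = a and b = b and lo = 2 and x = "G n" and y = "H n"])
    show "sandwiched (\<alpha>/M) 1 (\<rho> n) (G n n) (H n n)"
      using G_H_last[of n] sandwiched_start[of n] \<open>2 \<le> k\<close> \<open>k \<le> n\<close> by simp
  qed (use \<open>2 \<le> k\<close> \<open>k \<le> n\<close> alpha_pos alpha_le_M rho_root G_H_Suc in auto)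
  moreover have \<rho>k: "\<alpha> \<le> \<rho> k" "\<rho> k \<le> M" using rho_bounds[OF \<open>2 \<le> k\<close>] by auto
  ultimately have G: "\<alpha>/M * \<kappa> * (\<Prod>l\<in>{k..<n}. \<rho> l) * \<rho> k \<le> G n k"
    "G n k \<le> (\<Prod>l\<in>{k..<n}. \<rho> l) / \<kappa> * \<rho> k"
    using sandwiched_rho_products[OF \<open>2 \<le> k\<close>] alpha_pos by auto
  have nonneg: "0 \<le> \<alpha>/M * \<kappa> * (\<Prod>l\<in>{k..<n}. \<rho> l)" "0 \<le> (\<Prod>l\<in>{k..<n}. \<rho> l) / \<kappa>"
    using prod_rho_pos[of "{k..<n}"] \<open>2 \<le> k\<close> alpha_pos alpha_le_M kappa_pos by simp_all
  have "\<alpha>/M * \<kappa> * \<alpha> * (\<Prod>l\<in>{k..<n}. \<rho> l) = \<alpha>/M * \<kappa> * (\<Prod>l\<in>{k..<n}. \<rho> l) * \<alpha>"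
    by (simp add: mult_ac)
  also have "\<dots> \<le> \<alpha>/M * \<kappa> * (\<Prod>l\<in>{k..<n}. \<rho> l) * \<rho> k"
    using \<rho>k(1) nonneg(1) by (rule mult_left_mono)
  finally show "\<alpha>/M * \<kappa> * \<alpha> * (\<Prod>l\<in>{k..<n}. \<rho> l) \<le> G n k" using G(1) by linarith
  have "G n k \<le> (\<Prod>l\<in>{k..<n}. \<rho> l) / \<kappa> * M"
    using G(2) mult_left_mono[OF \<rho>k(2) nonneg(2)] by linarith
  then show "G n k \<le> M / \<kappa> * (\<Prod>l\<in>{k..<n}. \<rho> l)" by (simp add: mult.commute)
qed

lemma G_pos:
  assumes "2 \<le> k" "k \<le> n"
  shows "0 < G n k"
proof -
  obtain c where "0 < c" "c * (\<Prod>l\<in>{k..<n}. \<rho> l) \<le> G n k"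
    using G_bounds assms by blast
  moreover have "0 < (\<Prod>l\<in>{k..<n}. \<rho> l)" using prod_rho_pos[of "{k..<n}"] assms(1) by simp
  ultimately show ?thesis by (meson mult_pos_pos less_le_trans)
qed

lemma casoratian:
  assumes "2 \<le> k" "k \<le> n"
  shows "\<bar>G n k * H (Suc n) k - H n k * G (Suc n) k\<bar> = (\<Prod>i\<in>{k..n}. b i)"
  using assms(2,1)
proof (induction k rule: inc_induct)
  case base
  have "G (Suc n) n = a n * a (Suc n) + b n" "H (Suc n) n = a (Suc n)"
    using G_H_Suc[of n "Suc n"] G_H_last[of "Suc n"] by auto
  then show ?case using G_H_last[of n] rho_root(1)[of n] base by (simp add: algebra_simps)
next
  case (step k)
  have "G n k * H (Suc n) k - H n k * G (Suc n) k
      = - b k * (G n (Suc k) * H (Suc n) (Suc k) - H n (Suc k) * G (Suc n) (Suc k))"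
    using G_H_Suc[of k n] G_H_Suc[of k "Suc n"] step.hyps by (simp add: algebra_simps)
  then show ?case
    using step rho_root(1)[of k] by (simp add: abs_mult prod.atLeast_Suc_atMost)
qed

lemma zeta2_eq: "k \<le> n \<Longrightarrow> zeta2 q p1 p2 k n = H n k / G n k"
  unfolding zeta2_def using G_H_Suc[of k n] by (simp add: G_def)

lemma b_le_rho_sq: "2 \<le> k \<Longrightarrow> b k \<le> (1 - \<alpha>/M) * (\<rho> k)^2"
proof -
  assume "2 \<le> k"
  note c = rho_root[OF \<open>2 \<le> k\<close>] and \<rho> = rho_bounds[OF \<open>2 \<le> k\<close>]
  have "\<alpha> * \<rho> k \<le> a k * M"
    using \<rho> alpha_pos aa_ge[OF \<open>2 \<le> k\<close>] by (intro mult_mono) auto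
  then have "\<alpha>/M * \<rho> k \<le> a k"
    using \<rho> alpha_pos by (simp add: divide_le_eq mult.commute)
  then have "\<alpha>/M * \<rho> k * \<rho> k \<le> a k * \<rho> k"
    using c(1) by (intro mult_right_mono) auto
  then have "\<alpha>/M * (\<rho> k)^2 \<le> a k * \<rho> k" by (simp add: power2_eq_square mult.assoc)
  moreover have "b k = (\<rho> k)^2 - a k * \<rho> k" using c(1) by simp
  ultimately show ?thesis by (simp add: algebra_simps)
qed

lemma prod_b_le:
  assumes "2 \<le> k" "k \<le> n"
  shows "(\<Prod>i\<in>{k..n}. b i) \<le> M * (1 - \<alpha>/M)^(n - k) * ((\<Prod>l\<in>{k..<n}. \<rho> l) * (\<Prod>l\<in>{k..<Suc n}. \<rho> l))"
proof -
  define P where "P = (\<Prod>l\<in>{k..<n}. \<rho> l)"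
  have "(\<Prod>l\<in>{k..<n}. b l) \<le> (\<Prod>l\<in>{k..<n}. (1 - \<alpha>/M) * (\<rho> l)^2)"
    using b_le_rho_sq rho_root(1) assms(1) by (intro prod_mono) auto
  also have "\<dots> = (1 - \<alpha>/M)^(n - k) * P^2"
    unfolding P_def by (simp add: prod.distrib power2_eq_square)
  finally have "(\<Prod>l\<in>{k..<n}. b l) \<le> (1 - \<alpha>/M)^(n - k) * P^2" .
  moreover have "b n \<le> M * \<rho> n"
  proof -
    have "b n \<le> (\<rho> n)^2" using rho_root(1)[of n] assms by simp
    also have "\<dots> \<le> M * \<rho> n"
      using mult_right_mono[of "\<rho> n" M "\<rho> n"] rho_bounds[of n] alpha_pos assms
      by (simp add: power2_eq_square)
    finally show ?thesis .
  qed
  moreover have "0 \<le> (1 - \<alpha>/M)^(n - k) * P^2" "0 \<le> b n"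
    using alpha_pos alpha_le_M rho_root(1)[of n] assms by auto
  ultimately have "(\<Prod>l\<in>{k..<n}. b l) * b n \<le> (1 - \<alpha>/M)^(n - k) * P^2 * (M * \<rho> n)"
    by (intro mult_mono) auto
  then show ?thesis using assms(2) unfolding P_def
    by (simp add: atLeastLessThanSuc_atLeastAtMost[symmetric] prod.atLeastLessThan_Suc
        power2_eq_square mult_ac)
qed

lemma zeta2_increments:
  assumes "2 \<le> k"
  shows "\<exists>C. \<forall>n\<ge>k. \<bar>zeta2 q p1 p2 k (Suc n) - zeta2 q p1 p2 k n\<bar> \<le> C * (1 - \<alpha>/M)^(n - k)"
proof -
  obtain c where "0 < c" and G_lower: "\<And>n k. 2 \<le> k \<Longrightarrow> k \<le> n \<Longrightarrow> c * (\<Prod>l\<in>{k..<n}. \<rho> l) \<le> G n k"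
    using G_bounds by blast
  have "\<bar>zeta2 q p1 p2 k (Suc n) - zeta2 q p1 p2 k n\<bar> \<le> M / c^2 * (1 - \<alpha>/M)^(n - k)" if "k \<le> n" for n
  proof -
    define P P' where "P = (\<Prod>l\<in>{k..<n}. \<rho> l)" and "P' = (\<Prod>l\<in>{k..<Suc n}. \<rho> l)"
    have "0 < P" "0 < P'" unfolding P_def P'_def
      using prod_rho_pos[of "{k..<n}"] prod_rho_pos[of "{k..<Suc n}"] assms by auto
    have G: "c * P \<le> G n k" "c * P' \<le> G (Suc n) k"
      unfolding P_def P'_def using G_lower[of k n] G_lower[of k "Suc n"] assms that by simp_all
    have "0 < G n k" "0 < G (Suc n) k" using G_pos assms that by auto
    have "\<bar>zeta2 q p1 p2 k (Suc n) - zeta2 q p1 p2 k n\<bar>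
        = \<bar>G n k * H (Suc n) k - H n k * G (Suc n) k\<bar> / (G n k * G (Suc n) k)"
      using \<open>0 < G n k\<close> \<open>0 < G (Suc n) k\<close> that by (simp add: zeta2_eq abs_minus_commute field_simps)
    also have "\<dots> \<le> M * (1 - \<alpha>/M)^(n - k) * (P * P') / (c * P * (c * P'))"
      unfolding casoratian[OF assms that]
    proof (rule frac_le[OF _ prod_b_le[OF assms that, folded P_def P'_def]])
      show "0 \<le> M * (1 - \<alpha>/M)^(n - k) * (P * P')"
        using alpha_pos alpha_le_M \<open>0 < P\<close> \<open>0 < P'\<close> by simp
      show "0 < c * P * (c * P')" using \<open>0 < c\<close> \<open>0 < P\<close> \<open>0 < P'\<close> by simp
      show "c * P * (c * P') \<le> G n k * G (Suc n) k"
        using G \<open>0 < c\<close> \<open>0 < P\<close> \<open>0 < P'\<close> \<open>0 < G n k\<close> by (intro mult_mono) auto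
    qed
    also have "\<dots> = M / c^2 * (1 - \<alpha>/M)^(n - k)"
      using \<open>0 < P\<close> \<open>0 < P'\<close> \<open>0 < c\<close> by (simp add: field_simps power2_eq_square)
    finally show ?thesis .
  qed
  then show ?thesis by blast
qed

lemma zeta2_tendsto: "2 \<le> k \<Longrightarrow> (\<lambda>n. zeta2 q p1 p2 k n) \<longlonglongrightarrow> zeta q p1 p2 k"
proof -
  assume "2 \<le> k"
  obtain C where C: "\<And>n. k \<le> n \<Longrightarrow>
      \<bar>zeta2 q p1 p2 k (Suc n) - zeta2 q p1 p2 k n\<bar> \<le> C * (1 - \<alpha>/M)^(n - k)"
    using zeta2_increments[OF \<open>2 \<le> k\<close>] by blast
  have "summable (\<lambda>n. C * (1 - \<alpha>/M)^n)"
    using alpha_pos alpha_le_M by (intro summable_mult summable_geometric) auto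
  then have "summable (\<lambda>n. C * (1 - \<alpha>/M)^(n - k))"
    by (subst summable_iff_shift[symmetric, of _ k]) simp
  then have "summable (\<lambda>n. \<bar>zeta2 q p1 p2 k (Suc n) - zeta2 q p1 p2 k n\<bar>)"
    by (rule summable_comparison_test') (use C in simp)
  then have "convergent (\<lambda>n. zeta2 q p1 p2 k n)" by (rule convergent_of_summable_increments)
  then show ?thesis unfolding zeta_def by (simp add: convergent_LIMSEQ_iff)
qed

lemma prod_zeta2_telescope:
  assumes "2 \<le> i" "i \<le> j" "j < n"
  shows "(\<Prod>l\<in>{i..j}. zeta2 q p1 p2 l n) = G n (Suc j) / G n i"
  using assms(2,3)
proof (induction j rule: dec_induct)
  case base
  then show ?case unfolding zeta2_def G_def by simp
next
  case (step j)
  have "0 < G n (Suc j)" using G_pos assms(1) step by simp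
  then show ?case using step unfolding zeta2_def by (simp add: G_def[symmetric])
qed

lemma prod_zeta2_bounds:
  "\<exists>c>0. \<exists>C. \<forall>i j n. 2 \<le> i \<longrightarrow> i \<le> j \<longrightarrow> j < n \<longrightarrow>
     c * inverse (\<Prod>l\<in>{i..j}. \<rho> l) \<le> (\<Prod>l\<in>{i..j}. zeta2 q p1 p2 l n) \<and>
     (\<Prod>l\<in>{i..j}. zeta2 q p1 p2 l n) \<le> C * inverse (\<Prod>l\<in>{i..j}. \<rho> l)"
proof -
  obtain c C where "0 < c" "0 < C" and G_bounds': "\<And>n k. 2 \<le> k \<Longrightarrow> k \<le> n \<Longrightarrow>
      c * (\<Prod>l\<in>{k..<n}. \<rho> l) \<le> G n k \<and> G n k \<le> C * (\<Prod>l\<in>{k..<n}. \<rho> l)"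
    using G_bounds by blast
  have "c/C * inverse P \<le> (\<Prod>l\<in>{i..j}. zeta2 q p1 p2 l n) \<and>
        (\<Prod>l\<in>{i..j}. zeta2 q p1 p2 l n) \<le> C/c * inverse P"
    if "2 \<le> i" "i \<le> j" "j < n" and P_def: "P = (\<Prod>l\<in>{i..j}. \<rho> l)" for i j n P
  proof -
    define Q where "Q = (\<Prod>l\<in>{Suc j..<n}. \<rho> l)"
    have "0 < P" "0 < Q" unfolding P_def Q_def
      using prod_rho_pos[of "{i..j}"] prod_rho_pos[of "{Suc j..<n}"] that by auto
    have "(\<Prod>l\<in>{i..<n}. \<rho> l) = P * Q"
      unfolding P_def Q_def atLeastLessThanSuc_atLeastAtMost[symmetric]
      using that by (intro prod.atLeastLessThan_concat[symmetric]) auto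
    then have num: "c * Q \<le> G n (Suc j)" "G n (Suc j) \<le> C * Q"
      and den: "c * (P * Q) \<le> G n i" "G n i \<le> C * (P * Q)"
      using G_bounds'[of "Suc j" n] G_bounds'[of i n] that unfolding Q_def by auto
    have "0 < G n (Suc j)" "0 < G n i" using G_pos that by auto
    then have "0 \<le> G n (Suc j)" by simp
    have "c/C * inverse P = (c * Q) / (C * (P * Q))" using \<open>0 < Q\<close> by (simp add: field_simps)
    also have "\<dots> \<le> G n (Suc j) / G n i"
      using num den \<open>0 < c\<close> \<open>0 < P\<close> \<open>0 < Q\<close> \<open>0 < G n i\<close> \<open>0 \<le> G n (Suc j)\<close>
      by (intro frac_le) auto
    finally have "c/C * inverse P \<le> G n (Suc j) / G n i" .
    moreover have "G n (Suc j) / G n i \<le> (C * Q) / (c * (P * Q))"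
      using num den \<open>0 < c\<close> \<open>0 < P\<close> \<open>0 < Q\<close> \<open>0 < G n (Suc j)\<close> by (intro frac_le) auto
    moreover have "(C * Q) / (c * (P * Q)) = C/c * inverse P" using \<open>0 < Q\<close> by (simp add: field_simps)
    ultimately show ?thesis using prod_zeta2_telescope[OF that(1-3)] by simp
  qed
  moreover have "0 < c/C" using \<open>0 < c\<close> \<open>0 < C\<close> by simp
  ultimately show ?thesis by blast
qed

lemma zeta_prod_bounds:
  "\<exists>c>0. \<exists>C. \<forall>i j. 2 \<le> i \<longrightarrow> i \<le> j \<longrightarrow>
     c * (\<Prod>l\<in>{i..j}. inverse (\<rho> l)) \<le> (\<Prod>l\<in>{i..j}. zeta q p1 p2 l) \<and>
     (\<Prod>l\<in>{i..j}. zeta q p1 p2 l) \<le> C * (\<Prod>l\<in>{i..j}. inverse (\<rho> l))"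
proof -
  obtain c C where "0 < c" and finite_bounds: "\<And>i j n. 2 \<le> i \<Longrightarrow> i \<le> j \<Longrightarrow> j < n \<Longrightarrow>
      c * inverse (\<Prod>l\<in>{i..j}. \<rho> l) \<le> (\<Prod>l\<in>{i..j}. zeta2 q p1 p2 l n) \<and>
      (\<Prod>l\<in>{i..j}. zeta2 q p1 p2 l n) \<le> C * inverse (\<Prod>l\<in>{i..j}. \<rho> l)"
    using prod_zeta2_bounds by blast
  have "c * inverse (\<Prod>l\<in>{i..j}. \<rho> l) \<le> (\<Prod>l\<in>{i..j}. zeta q p1 p2 l) \<and>
        (\<Prod>l\<in>{i..j}. zeta q p1 p2 l) \<le> C * inverse (\<Prod>l\<in>{i..j}. \<rho> l)"
    if "2 \<le> i" "i \<le> j" for i j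
  proof -
    have lim: "(\<lambda>n. \<Prod>l\<in>{i..j}. zeta2 q p1 p2 l n) \<longlonglongrightarrow> (\<Prod>l\<in>{i..j}. zeta q p1 p2 l)"
      using zeta2_tendsto that by (intro tendsto_prod) auto
    have ev: "\<forall>\<^sub>F n in sequentially. j < n" by (rule eventually_gt_at_top)
    show ?thesis
      using tendsto_lowerbound[OF lim eventually_mono[OF ev]] tendsto_upperbound[OF lim eventually_mono[OF ev]]
        finite_bounds[OF that] by auto
  qed
  then show ?thesis using \<open>0 < c\<close> by (auto simp: prod_inversef[symmetric] comp_def)
qed

lemma FX_eq: "FX q p1 p2 m = 1 + (\<Sum>j. ennreal (X m (m+1+j)))"
  unfolding FX_def FX2_def X_def[symmetric] by (rule SUP_one_plus_partial_sums)

lemma FY_eq: "FY q p1 p2 m = 1 + (\<Sum>j. ennreal (\<Prod>i\<in>{m+1..m+1+j}. zeta q p1 p2 i))"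
  unfolding FY_def FY2_def by (rule SUP_one_plus_partial_sums)

lemma DX_DY_monotone:
  "(mono_on {N0<..} (DX q p1 p2) \<or> antimono_on {N0<..} (DX q p1 p2)) \<and>
   (mono_on {N0<..} (DY q p1 p2) \<or> antimono_on {N0<..} (DY q p1 p2))"
proof -
  have pos: "\<And>i. N0 \<le> i \<Longrightarrow> 0 < \<rho> i" using rho_root(1) N0_ge by auto
  have DX: "DX q p1 p2 = (\<lambda>n. 1 + (\<Sum>j. ennreal (\<Prod>i\<in>{n+1..n+1+j}. \<rho> i)))"
    and DY: "DY q p1 p2 = (\<lambda>n. 1 + (\<Sum>j. ennreal (\<Prod>i\<in>{n+1..n+1+j}. inverse (\<rho> i))))"
    by (simp_all add: DX_def DY_def fun_eq_iff)
  from rho_monotone show ?thesis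
  proof
    assume mono: "mono_on {N0..} \<rho>"
    have "mono_on {N0<..} (DX q p1 p2)" unfolding DX
      by (rule mono_on_one_plus_tail_products[OF mono]) (use pos in \<open>auto simp: less_imp_le\<close>)
    moreover have "antimono_on {N0<..} (DY q p1 p2)" unfolding DY
      by (rule antimono_on_one_plus_tail_products[OF antimono_on_inverse[OF mono]])
        (use pos in \<open>auto simp: less_imp_le\<close>)
    ultimately show ?thesis by blast
  next
    assume antimono: "antimono_on {N0..} \<rho>"
    have "antimono_on {N0<..} (DX q p1 p2)" unfolding DX
      by (rule antimono_on_one_plus_tail_products[OF antimono]) (use pos in \<open>auto simp: less_imp_le\<close>)
    moreover have "mono_on {N0<..} (DY q p1 p2)" unfolding DY
      by (rule mono_on_one_plus_tail_products[OF mono_on_inverse[OF antimono]])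
        (use pos in \<open>auto simp: less_imp_le\<close>)
    ultimately show ?thesis by blast
  qed
qed

lemma F_D_comparisons_of_termwise:
  assumes "0 < c" "c \<le> 1" "1 \<le> C" "1 \<le> m"
    and X: "\<And>s. m < s \<Longrightarrow>
      c * (\<Prod>i\<in>{m+1..s}. \<rho> i) \<le> X m s \<and> X m s \<le> C * (\<Prod>i\<in>{m+1..s}. \<rho> i)"
    and Z: "\<And>j. m + 1 \<le> j \<Longrightarrow>
      c * (\<Prod>i\<in>{m+1..j}. inverse (\<rho> i)) \<le> (\<Prod>i\<in>{m+1..j}. zeta q p1 p2 i) \<and>
      (\<Prod>i\<in>{m+1..j}. zeta q p1 p2 i) \<le> C * (\<Prod>i\<in>{m+1..j}. inverse (\<rho> i))"
  shows "ennreal c * DX q p1 p2 m \<le> FX q p1 p2 m" "FX q p1 p2 m \<le> ennreal C * DX q p1 p2 m"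
    and "ennreal c * DY q p1 p2 m \<le> FY q p1 p2 m" "FY q p1 p2 m \<le> ennreal C * DY q p1 p2 m"
    and "ennreal c * DY2 q p1 p2 m n \<le> FY2 q p1 p2 m n" "FY2 q p1 p2 m n \<le> ennreal C * DY2 q p1 p2 m n"
proof -
  have prods_nonneg: "0 \<le> (\<Prod>i\<in>{m+1..j}. \<rho> i)" "0 \<le> (\<Prod>i\<in>{m+1..j}. inverse (\<rho> i))" for j
    using prod_rho_pos[of "{m+1..j}"] rho_root(1) \<open>1 \<le> m\<close> by (auto intro!: prod_nonneg simp: less_imp_le)
  note bounds_inf = one_plus_suminf_ennreal_bounds[OF less_imp_le[OF \<open>0 < c\<close>] \<open>c \<le> 1\<close> \<open>1 \<le> C\<close>]
  note bounds_fin = one_plus_sum_ennreal_bounds[OF less_imp_le[OF \<open>0 < c\<close>] \<open>c \<le> 1\<close> \<open>1 \<le> C\<close>, of "{m+1..<n}"]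
  have X': "c * (\<Prod>i\<in>{m+1..m+1+j}. \<rho> i) \<le> X m (m+1+j) \<and> X m (m+1+j) \<le> C * (\<Prod>i\<in>{m+1..m+1+j}. \<rho> i)"
    for j using X[of "m+1+j"] by simp
  have "0 \<le> (\<Prod>i\<in>{m+1..m+1+j}. \<rho> i)" for j by (rule prods_nonneg(1))
  then show "ennreal c * DX q p1 p2 m \<le> FX q p1 p2 m" "FX q p1 p2 m \<le> ennreal C * DX q p1 p2 m"
    unfolding DX_def FX_eq using bounds_inf X' by auto
  show "ennreal c * DY q p1 p2 m \<le> FY q p1 p2 m" "FY q p1 p2 m \<le> ennreal C * DY q p1 p2 m"
    unfolding DY_def FY_eq using bounds_inf[OF prods_nonneg(2) Z[OF le_add1]] by auto
  show "ennreal c * DY2 q p1 p2 m n \<le> FY2 q p1 p2 m n" "FY2 q p1 p2 m n \<le> ennreal C * DY2 q p1 p2 m n"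
    unfolding DY2_def FY2_def using bounds_fin[OF prods_nonneg(2) Z] by auto
qed

lemma F_D_comparisons:
  "\<exists>c7 c8 :: real. 0 < c7 \<and> c7 < c8 \<and>
     (\<forall>m n. 1 \<le> m \<and> m < n \<longrightarrow>
        ennreal c7 * DX q p1 p2 m \<le> FX q p1 p2 m \<and> FX q p1 p2 m \<le> ennreal c8 * DX q p1 p2 m \<and>
        ennreal c7 * DY q p1 p2 m \<le> FY q p1 p2 m \<and> FY q p1 p2 m \<le> ennreal c8 * DY q p1 p2 m \<and>
        ennreal c7 * DY2 q p1 p2 m n \<le> FY2 q p1 p2 m n \<and> FY2 q p1 p2 m n \<le> ennreal c8 * DY2 q p1 p2 m n)"
proof -
  obtain cX CX where "0 < cX" and X: "\<And>m s. 1 \<le> m \<Longrightarrow> m < s \<Longrightarrow>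
      cX * (\<Prod>i\<in>{m+1..s}. \<rho> i) \<le> X m s \<and> X m s \<le> CX * (\<Prod>i\<in>{m+1..s}. \<rho> i)"
    using X_bounds by blast
  obtain cZ CZ where "0 < cZ" and Z: "\<And>i j. 2 \<le> i \<Longrightarrow> i \<le> j \<Longrightarrow>
      cZ * (\<Prod>l\<in>{i..j}. inverse (\<rho> l)) \<le> (\<Prod>l\<in>{i..j}. zeta q p1 p2 l) \<and>
      (\<Prod>l\<in>{i..j}. zeta q p1 p2 l) \<le> CZ * (\<Prod>l\<in>{i..j}. inverse (\<rho> l))"
    using zeta_prod_bounds by blast
  define c7 where "c7 = min (1/2) (min cX cZ)"
  define c8 where "c8 = max 1 (max CX CZ)"
  have c7: "0 < c7" "c7 \<le> 1" "c7 < c8" "c7 \<le> cX" "c7 \<le> cZ" and c8: "1 \<le> c8" "CX \<le> c8" "CZ \<le> c8"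
    unfolding c7_def c8_def using \<open>0 < cX\<close> \<open>0 < cZ\<close> by auto
  have widen: "c7 * u \<le> v \<and> v \<le> c8 * u"
    if "c * u \<le> v \<and> v \<le> C * u" "c7 \<le> c" "C \<le> c8" "0 \<le> u" for c C u v :: real
    using that mult_right_mono[of c7 c u] mult_right_mono[of C c8 u] by linarith
  have nonneg: "0 \<le> (\<Prod>l\<in>{i..j}. \<rho> l)" "0 \<le> (\<Prod>l\<in>{i..j}. inverse (\<rho> l))" if "2 \<le> i" for i j
    using prod_rho_pos[of "{i..j}"] rho_root(1) that by (auto intro!: prod_nonneg simp: less_imp_le)
  have "ennreal c7 * DX q p1 p2 m \<le> FX q p1 p2 m \<and> FX q p1 p2 m \<le> ennreal c8 * DX q p1 p2 m \<and>
        ennreal c7 * DY q p1 p2 m \<le> FY q p1 p2 m \<and> FY q p1 p2 m \<le> ennreal c8 * DY q p1 p2 m \<and>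
        ennreal c7 * DY2 q p1 p2 m n \<le> FY2 q p1 p2 m n \<and> FY2 q p1 p2 m n \<le> ennreal c8 * DY2 q p1 p2 m n"
    if "1 \<le> m" for m n
  proof -
    have "c7 * (\<Prod>i\<in>{m+1..s}. \<rho> i) \<le> X m s \<and> X m s \<le> c8 * (\<Prod>i\<in>{m+1..s}. \<rho> i)"
      if "m < s" for s
      using widen[OF X[OF \<open>1 \<le> m\<close> that] c7(4) c8(2) nonneg(1)] \<open>1 \<le> m\<close> by simp
    moreover have "c7 * (\<Prod>i\<in>{m+1..j}. inverse (\<rho> i)) \<le> (\<Prod>i\<in>{m+1..j}. zeta q p1 p2 i) \<and>
        (\<Prod>i\<in>{m+1..j}. zeta q p1 p2 i) \<le> c8 * (\<Prod>i\<in>{m+1..j}. inverse (\<rho> i))" if "m + 1 \<le> j" for j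
      using widen[OF Z[OF _ that] c7(5) c8(3) nonneg(2)] \<open>1 \<le> m\<close> by simp
    ultimately show ?thesis
      using F_D_comparisons_of_termwise[OF c7(1,2) c8(1) \<open>1 \<le> m\<close>] by blast
  qed
  then show ?thesis using c7(1,3) by blast
qed

end

theorem lemma6:
  fixes q p1 p2 :: "nat \<Rightarrow> real" and a b :: real and N0 :: nat
  assumes hq: "\<And>k. k \<ge> 2 \<Longrightarrow> q k > 0"
    and hp1: "\<And>k. k \<ge> 2 \<Longrightarrow> p1 k \<ge> 0"
    and hp2: "\<And>k. k \<ge> 2 \<Longrightarrow> p2 k > 0"
    and hsum: "\<And>k. k \<ge> 2 \<Longrightarrow> q k + p1 k + p2 k = 1"
    and ha: "aa q p1 p2 \<longlonglongrightarrow> a" and apos: "a > 0"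
    and hb: "bb q p1 p2 \<longlonglongrightarrow> b" and bpos: "b > 0"
    and hN0: "N0 \<ge> 2"
    and hmono: "mono_on {N0..} (rho q p1 p2) \<or> antimono_on {N0..} (rho q p1 p2)"
  shows "(mono_on {N0<..} (DX q p1 p2) \<or> antimono_on {N0<..} (DX q p1 p2))
       \<and> (mono_on {N0<..} (DY q p1 p2) \<or> antimono_on {N0<..} (DY q p1 p2))
       \<and> (\<exists>c7 c8 :: real. 0 < c7 \<and> c7 < c8 \<and>
            (\<forall>m n. 1 \<le> m \<and> m < n \<longrightarrow>
               ennreal c7 * DX q p1 p2 m \<le> FX q p1 p2 m \<and> FX q p1 p2 m \<le> ennreal c8 * DX q p1 p2 m \<and>
               ennreal c7 * DY q p1 p2 m \<le> FY q p1 p2 m \<and> FY q p1 p2 m \<le> ennreal c8 * DY q p1 p2 m \<and>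
               ennreal c7 * DY2 q p1 p2 m n \<le> FY2 q p1 p2 m n \<and> FY2 q p1 p2 m n \<le> ennreal c8 * DY2 q p1 p2 m n))"
proof -
  have "0 < aa q p1 p2 k" if "2 \<le> k" for k
    using hq[OF that] hp1[OF that] hp2[OF that] unfolding aa_def by simp
  then obtain \<alpha> where "0 < \<alpha>" and \<alpha>: "\<forall>k\<ge>2. \<alpha> \<le> aa q p1 p2 k"
    using uniform_lower_bound_of_positive_limit[OF ha apos] by blast
  have "rho q p1 p2 \<longlonglongrightarrow> (a + sqrt (a^2 + 4 * b)) / 2"
    unfolding rho_def by (intro tendsto_intros ha hb) auto
  then obtain M where M: "\<forall>k. rho q p1 p2 k \<le> M"
    using Bseq_bdd_above[OF convergent_imp_Bseq] by (auto simp: convergent_def bdd_above_def)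
  interpret companion_coefficients q p1 p2 \<alpha> M N0
    using \<open>0 < \<alpha>\<close> \<alpha> M hN0 hmono hq hp2 by unfold_locales (auto simp: bb_def less_imp_le)
  show ?thesis using DX_DY_monotone F_D_comparisons by blast
qed

end
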